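(* In the symmetric-erasure retransmission model described in the context ("waits do not loop"): let $\tau\ge 1$, $\ell\ge 1$, and let $u_1,\dots,u_{\ell+1}$ be vertices with $u_{i+1}\in\mathcal N_{u_i}$ for $1\le i\le \ell$, such that for every $1\le i\le\ell$ the event $W^{(\tau+i-1)}_{u_{i+1}u_i}$ occurs, and for every $2\le i\le \ell$ the event $W^{(\tau+i-1)}_{u_{i+1}u_i}$ is caused by $W^{(\tau+i-2)}_{u_iu_{i-1}}$. Then the vertices $u_1,\dots,u_\ell$ are pairwise distinct.
   Context: Let $\mathcal G=(\mathcal V,\mathcal E)$ be a finite connected undirected simple graph with $N=|\mathcal V|$ vertices and maximum degree $\Delta$; $\mathcal N_v$ denotes the set of neighbours of $v$. Fix an erasure probability $p\in[0,1]$. Erasures are symmetric: for every undirected edge $e\in\mathcal E$ and every round $t\ge 1$ there is a random variable $S^e_t\in\{0,1\}$ with $P(S^e_t=1)=1-p$ ($S^e_t=1$ means the edge works in round $t$, $S^e_t=0$ means the packets in both directions on $e$ are erased in round $t$), and all these variables are mutually independent. The retransmission protocol for distributed consensus is described by integer state variables $n_{vu}(t)$, for every ordered pair $(v,u)$ with $u\in\mathcal N_v$ and every $t\ge 0$ (the index of the latest iterate of node $u$ available at node $v$ after round $t$), together with $n_v(t)=1+\min_{u\in\mathcal N_v} n_{vu}(t)$ (the number of iterations of the consensus update $x^v_{k+1}=x^v_k-\epsilon\sum_{u\in\mathcal N_v}(x^v_k-x^u_k)$ that node $v$ has completed after round $t$). Initially $n_{vu}(0)=-1$ for all such pairs (so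 $n_v(0)=0$), and for all $t\ge 0$ $$n_{vu}(t+1)=n_{vu}(t)+S^{\{u,v\}}_{t+1}\cdot\mathbf 1\{n_u(t)>n_{vu}(t)\}.$$ Node $u$ is said to transmit a "wait" to node $v$ in round $t+1$ iff $n_{vu}(t)=n_u(t)$. For $\tau\ge1$ and $u\in\mathcal N_v$, $W^{(\tau)}_{uv}$ denotes the event that node $v$ transmits a wait to node $u$ in round $\tau$, i.e. $n_{uv}(\tau-1)=n_v(\tau-1)$. For vertices $v,u,u'$ with $u\in\mathcal N_v$, $u'\in\mathcal N_u$, if both $W^{(\tau)}_{uv}$ and $W^{(\tau+1)}_{u'u}$ occur, then $W^{(\tau)}_{uv}$ is said to cause $W^{(\tau+1)}_{u'u}$ if (a) $n_u(\tau-1)=1+n_{uv}(\tau-1)$ and (b) $n_{u'u}(\tau)=n_u(\tau)$. *)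

theory Defs
  imports Main
begin

text \<open>Simple graph given by an adjacency relation E on a vertex set V.
  A realization of the erasure process: S e t (e an undirected edge {u,v},
  t \<ge> 1 a round) is True iff edge e works in round t.\<close>

definition simple_connected_graph :: "'a set \<Rightarrow> ('a \<Rightarrow> 'a \<Rightarrow> bool) \<Rightarrow> bool" where
  "simple_connected_graph V E \<longleftrightarrow>
     finite V \<and> V \<noteq> {} \<and>
     (\<forall>u v. E u v \<longrightarrow> u \<in> V \<and> v \<in> V) \<and>
     (\<forall>u v. E u v \<longrightarrow> E v u) \<and>
     (\<forall>v. \<not> E v v) \<and>
     (\<forall>u\<in>V. \<forall>v\<in>V. E\<^sup>*\<^sup>* u v)"

definition node_count :: "('a \<Rightarrow> 'a \<Rightarrow> bool) \<Rightarrow> ('a \<Rightarrow> 'a \<Rightarrow> int) \<Rightarrow> 'a \<Rightarrow> int" where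
  "node_count E m v = 1 + Min {m v u | u. E v u}"

fun nvu :: "('a \<Rightarrow> 'a \<Rightarrow> bool) \<Rightarrow> ('a set \<Rightarrow> nat \<Rightarrow> bool) \<Rightarrow> nat \<Rightarrow> 'a \<Rightarrow> 'a \<Rightarrow> int" where
  "nvu E S 0 = (\<lambda>v u. -1)"
| "nvu E S (Suc t) = (\<lambda>v u. nvu E S t v u +
      (if S {u, v} (Suc t) \<and> node_count E (nvu E S t) u > nvu E S t v u then 1 else 0))"

definition nv :: "('a \<Rightarrow> 'a \<Rightarrow> bool) \<Rightarrow> ('a set \<Rightarrow> nat \<Rightarrow> bool) \<Rightarrow> nat \<Rightarrow> 'a \<Rightarrow> int" where
  "nv E S t v = node_count E (nvu E S t) v"

text \<open>W^{(tau)}_{uv}: node v transmits a wait to node u in round tau (tau \<ge> 1).\<close>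
definition wait_event :: "('a \<Rightarrow> 'a \<Rightarrow> bool) \<Rightarrow> ('a set \<Rightarrow> nat \<Rightarrow> bool) \<Rightarrow> nat \<Rightarrow> 'a \<Rightarrow> 'a \<Rightarrow> bool" where
  "wait_event E S \<tau> u v \<longleftrightarrow> 1 \<le> \<tau> \<and> E v u \<and> nvu E S (\<tau> - 1) u v = nv E S (\<tau> - 1) v"

definition causes :: "('a \<Rightarrow> 'a \<Rightarrow> bool) \<Rightarrow> ('a set \<Rightarrow> nat \<Rightarrow> bool) \<Rightarrow> nat \<Rightarrow> 'a \<Rightarrow> 'a \<Rightarrow> 'a \<Rightarrow> bool" where
  "causes E S \<tau> u v u' \<longleftrightarrow>
     wait_event E S \<tau> u v \<and> wait_event E S (\<tau> + 1) u' u \<and>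
     nv E S (\<tau> - 1) u = 1 + nvu E S (\<tau> - 1) u v \<and>
     nvu E S \<tau> u' u = nv E S \<tau> u"

end

theory Submission
  imports Defs
begin

(* Two facts about the protocol drive the proof:
   (1) counts never decrease and grow by at most one per round, because every table entry
       n_{vu} does so and n_v is one plus their minimum;
   (2) if W^(tau)_{uv} causes a later wait, then n_u(tau-1) = 1 + n_v(tau-1), since the wait
       says n_{uv}(tau-1) = n_v(tau-1) and causation (a) says n_u(tau-1) = 1 + n_{uv}(tau-1).
   Along a causal chain u_j, u_{j+1}, ... the count therefore gains one per step of the chain
   while only one round passes per step (using (1) to carry the count forward in time), so
   after d steps the current vertex is ahead of u_j's old count by d + 1.  If u_{j+d+1} = u_j,
   this contradicts the growth bound (1) for u_j over d rounds. *)

lemma simple_graph_finite_neighbours: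
  assumes "simple_connected_graph V E"
  shows "finite {x. E v x}"
proof -
  have "{x. E v x} \<subseteq> V" using assms unfolding simple_connected_graph_def by auto
  moreover have "finite V" using assms unfolding simple_connected_graph_def by auto
  ultimately show ?thesis by (rule finite_subset)
qed

text \<open>The minimum over a finite nonempty neighbourhood respects pointwise bounds up to a
  constant shift; with c = 0 this is monotonicity of node_count, with c = 1 it bounds its growth.\<close>
lemma node_count_le_shift:
  assumes fin: "finite {x. E v x}" and ne: "{x. E v x} \<noteq> {}"
    and le: "\<And>x. E v x \<Longrightarrow> m1 v x \<le> m2 v x + c"
  shows "node_count E m1 v \<le> node_count E m2 v + c"
proof -
  have img: "{m v x | x. E v x} = (\<lambda>x. m v x) ` {x. E v x}" for m :: "'a \<Rightarrow> 'a \<Rightarrow> int"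
    by auto
  have "Min ((\<lambda>x. m2 v x) ` {x. E v x}) \<in> (\<lambda>x. m2 v x) ` {x. E v x}"
    using fin ne by (intro Min_in) auto
  then obtain x0 where x0: "E v x0" "Min ((\<lambda>x. m2 v x) ` {x. E v x}) = m2 v x0"
    by auto
  have "Min ((\<lambda>x. m1 v x) ` {x. E v x}) \<le> m1 v x0"
    using fin x0(1) by (intro Min_le) auto
  also have "\<dots> \<le> m2 v x0 + c" using le x0(1) .
  finally show ?thesis unfolding node_count_def img using x0(2) by simp
qed

lemma nvu_Suc_bounds:
  "nvu E S t v u \<le> nvu E S (Suc t) v u" "nvu E S (Suc t) v u \<le> nvu E S t v u + 1"
  by simp_all

lemma nv_le_Suc:
  assumes "finite {x. E v x}" "{x. E v x} \<noteq> {}"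
  shows "nv E S t v \<le> nv E S (Suc t) v"
  using node_count_le_shift[where E=E and v=v, OF assms, of "nvu E S t" "nvu E S (Suc t)" 0] nvu_Suc_bounds(1)
  unfolding nv_def by simp

lemma nv_add_le:
  assumes "finite {x. E v x}" "{x. E v x} \<noteq> {}"
  shows "nv E S (t + k) v \<le> nv E S t v + int k"
proof (induction k)
  case 0
  then show ?case by simp
next
  case (Suc k)
  have "nv E S (Suc (t + k)) v \<le> nv E S (t + k) v + 1"
    using node_count_le_shift[where E=E and v=v, OF assms, of "nvu E S (Suc (t + k))" "nvu E S (t + k)" 1]
      nvu_Suc_bounds(2) unfolding nv_def by simp
  then show ?case using Suc.IH by simp
qed

lemma causes_count_jump:
  assumes "causes E S \<tau> u v u'"
  shows "nv E S (\<tau> - 1) u = 1 + nv E S (\<tau> - 1) v"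
  using assms unfolding causes_def wait_event_def by simp

lemma walk_count_growth:
  fixes c :: "nat \<Rightarrow> 'v \<Rightarrow> int" and w :: "nat \<Rightarrow> 'v"
  assumes mono: "\<And>d t. d < n \<Longrightarrow> c t (w d) \<le> c (Suc t) (w d)"
    and jump: "\<And>d. d < n \<Longrightarrow> c (s + d) (w (Suc d)) = 1 + c (s + d) (w d)"
  shows "d < n \<Longrightarrow> int d + c s (w 0) \<le> c (s + d) (w d)"
proof (induction d)
  case 0
  then show ?case by simp
next
  case (Suc d)
  have "int (Suc d) + c s (w 0) \<le> 1 + c (s + d) (w d)" using Suc by simp
  also have "\<dots> = c (s + d) (w (Suc d))" using jump Suc.prems by simp
  also have "\<dots> \<le> c (s + Suc d) (w (Suc d))" using mono[OF Suc.prems] by simp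
  finally show ?case .
qed

text \<open>Hence such a walk never returns to its start: after n steps (n \<ge> 1) its count would be
  ahead of the start by n although only n - 1 rounds have passed.\<close>
lemma walk_no_return:
  fixes c :: "nat \<Rightarrow> 'v \<Rightarrow> int" and w :: "nat \<Rightarrow> 'v"
  assumes mono: "\<And>d t. d < n \<Longrightarrow> c t (w d) \<le> c (Suc t) (w d)"
    and jump: "\<And>d. d < n \<Longrightarrow> c (s + d) (w (Suc d)) = 1 + c (s + d) (w d)"
    and slow: "\<And>k. c (s + k) (w 0) \<le> c s (w 0) + int k"
    and "0 < n"
  shows "w n \<noteq> w 0"
proof
  assume returns: "w n = w 0"
  obtain d where n: "n = Suc d" using \<open>0 < n\<close> by (cases n) auto
  have "int d + 1 + c s (w 0) \<le> c (s + d) (w (Suc d))"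
    using walk_count_growth[where c = c and w = w and n = n and s = s, OF mono jump, of d] jump[of d] n by simp
  also have "\<dots> \<le> c s (w 0) + int d" using slow[of d] returns n by simp
  finally show False by simp
qed

text \<open>A causal chain of waits u_1, u_2, \<dots>, u_l (the hypotheses of the theorem) never returns
  to an earlier vertex: the walk u_j, u_{j+1}, \<dots>, u_i, started at round tau + j - 2, satisfies
  the hypotheses of walk_no_return for the counts n_v.\<close>
lemma causal_chain_no_return:
  assumes fin: "\<And>v. finite {x. E v x}"
    and edges: "\<forall>k\<in>{1..l}. E (u k) (u (k + 1))"
    and "1 \<le> \<tau>"
    and chain: "\<forall>k\<in>{2..l}. causes E S (\<tau> + k - 2) (u k) (u (k - 1)) (u (k + 1))"
    and j: "j \<in> {1..l}" and i: "i \<in> {1..l}" and "j < i"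
  shows "u i \<noteq> u j"
proof -
  have ne: "{x. E (u k) x} \<noteq> {}" if "k \<in> {1..l}" for k using edges that by auto
  have jump: "nv E S (\<tau> + j - 2 + d) (u (j + Suc d)) = 1 + nv E S (\<tau> + j - 2 + d) (u (j + d))"
    if "d < i - j" for d
  proof -
    have "j + Suc d \<in> {2..l}" using j i that by auto
    then have "causes E S (\<tau> + (j + Suc d) - 2) (u (j + Suc d)) (u (j + d)) (u (j + Suc d + 1))"
      using chain by fastforce
    moreover have "\<tau> + (j + Suc d) - 2 - 1 = \<tau> + j - 2 + d" using \<open>1 \<le> \<tau>\<close> j by auto
    ultimately show ?thesis using causes_count_jump by metis
  qed
  have mono: "nv E S t (u (j + d)) \<le> nv E S (Suc t) (u (j + d))" if "d < i - j" for d t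
  proof -
    have "j + d \<in> {1..l}" using j i that by auto
    from ne[OF this] show ?thesis by (rule nv_le_Suc[where E = E, OF fin])
  qed
  have slow: "nv E S (\<tau> + j - 2 + k) (u (j + 0)) \<le> nv E S (\<tau> + j - 2) (u (j + 0)) + int k"
    for k using nv_add_le[where E = E and v = "u j", OF fin ne[OF j]] by simp
  have "u (j + (i - j)) \<noteq> u (j + 0)"
    using walk_no_return[where c = "nv E S" and w = "\<lambda>d. u (j + d)"
        and n = "i - j" and s = "\<tau> + j - 2", OF mono jump slow] \<open>j < i\<close> by simp
  then show ?thesis using \<open>j < i\<close> by simp
qed

theorem lemma10:
  fixes V :: "'a set" and E :: "'a \<Rightarrow> 'a \<Rightarrow> bool" and S :: "'a set \<Rightarrow> nat \<Rightarrow> bool"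
    and \<tau> l :: nat and u :: "nat \<Rightarrow> 'a"
  assumes "simple_connected_graph V E"
    and "1 \<le> \<tau>" and "1 \<le> l"
    and "\<forall>i\<in>{1..l+1}. u i \<in> V"
    and "\<forall>i\<in>{1..l}. E (u i) (u (i + 1))"
    and "\<forall>i\<in>{1..l}. wait_event E S (\<tau> + i - 1) (u (i + 1)) (u i)"
    and "\<forall>i\<in>{2..l}. causes E S (\<tau> + i - 2) (u i) (u (i - 1)) (u (i + 1))"
  shows "inj_on u {1..l}"
proof (rule inj_onI)
  fix i j assume "i \<in> {1..l}" "j \<in> {1..l}" "u i = u j"
  have fin: "finite {x. E v x}" for v using simple_graph_finite_neighbours[OF assms(1)] .
  have "u a \<noteq> u b" if "a \<in> {1..l}" "b \<in> {1..l}" "b < a" for a b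
    using causal_chain_no_return[where E = E, OF fin assms(5,2,7) that(2,1,3)] .
  then show "i = j" using \<open>i \<in> {1..l}\<close> \<open>j \<in> {1..l}\<close> \<open>u i = u j\<close>
    by (metis linorder_neqE_nat)
qed

end
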